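(* Let $\Omega$ be a finite set, $(H_i\mid i\in\Omega)$ finite abelian groups, $\mathbf{H}=\prod_{i\in\Omega}H_i$, and let $\mathbf{P}=(\Omega,\preccurlyeq_{\mathbf{P}})$ be a hierarchical poset. Then the dual partition $\Lambda$ of $\mathcal{Q}(\mathbf{H},\mathbf{P})$ is finer than $\mathcal{Q}(\hat{\mathbf{H}},\overline{\mathbf{P}})$.
   Context: $\hat{\mathbf{H}}$ is the character group of $\mathbf{H}$, identified with $\prod_i\hat{H_i}$ via $\alpha(\beta)=\prod_i\alpha_{(i)}(\beta_{(i)})$; $\mathrm{supp}$ of a codeword is the set of coordinates where it is not the identity. $\overline{\mathbf{P}}$ is the dual poset. For a poset $\mathbf{Q}$ on $\Omega$, $\langle B\rangle_{\mathbf{Q}}$ is the down-closure of $B$ in $\mathbf{Q}$ and $\mathrm{wt}_{\mathbf{Q}}(\beta)=|\langle\mathrm{supp}(\beta)\rangle_{\mathbf{Q}}|$. $\mathcal{Q}(\mathbf{H},\mathbf{P})$ (resp. $\mathcal{Q}(\hat{\mathbf{H}},\overline{\mathbf{P}})$) is the partition of $\mathbf{H}$ (resp. $\hat{\mathbf{H}}$) into classes of equal $\mathbf{P}$-weight (resp. $\overline{\mathbf{P}}$-weight). $\Lambda$ is the partition of $\hat{\mathbf{H}}$ with $\chi\sim\psi$ iff $\sum_{b\in B}\chi(b)=\sum_{b\in B}\psi(b)$ for every block $B$ of $\mathcal{Q}(\mathbf{H},\mathbf{P})$. A partition is finer than another if each of its blocks lies in a block of the other. $\mathrm{len}(y)$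 is the largest cardinality of a chain in $\mathbf{P}$ with greatest element $y$; $\mathbf{P}$ is hierarchical if $\mathrm{len}(u)+1\leqslant\mathrm{len}(v)$ implies $u\preccurlyeq_{\mathbf{P}}v$. *)

theory Defs
  imports "HOL-Algebra.Group" Complex_Main
begin

definition poset_on :: "'i set \<Rightarrow> ('i \<Rightarrow> 'i \<Rightarrow> bool) \<Rightarrow> bool" where
  "poset_on \<Omega> leq \<longleftrightarrow>
     (\<forall>x\<in>\<Omega>. leq x x) \<and>
     (\<forall>x\<in>\<Omega>. \<forall>y\<in>\<Omega>. leq x y \<and> leq y x \<longrightarrow> x = y) \<and>
     (\<forall>x\<in>\<Omega>. \<forall>y\<in>\<Omega>. \<forall>z\<in>\<Omega>. leq x y \<and> leq y z \<longrightarrow> leq x z)"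

definition dual_order :: "('i \<Rightarrow> 'i \<Rightarrow> bool) \<Rightarrow> 'i \<Rightarrow> 'i \<Rightarrow> bool" where
  "dual_order leq x y \<longleftrightarrow> leq y x"

definition chain_top :: "'i set \<Rightarrow> ('i \<Rightarrow> 'i \<Rightarrow> bool) \<Rightarrow> 'i \<Rightarrow> 'i set \<Rightarrow> bool" where
  "chain_top \<Omega> leq y C \<longleftrightarrow> C \<subseteq> \<Omega> \<and> y \<in> C \<and>
     (\<forall>x\<in>C. \<forall>z\<in>C. leq x z \<or> leq z x) \<and> (\<forall>x\<in>C. leq x y)"

definition len :: "'i set \<Rightarrow> ('i \<Rightarrow> 'i \<Rightarrow> bool) \<Rightarrow> 'i \<Rightarrow> nat" where
  "len \<Omega> leq y = Max (card ` {C. chain_top \<Omega> leq y C})"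

definition hierarchical :: "'i set \<Rightarrow> ('i \<Rightarrow> 'i \<Rightarrow> bool) \<Rightarrow> bool" where
  "hierarchical \<Omega> leq \<longleftrightarrow>
     (\<forall>u\<in>\<Omega>. \<forall>v\<in>\<Omega>. len \<Omega> leq u + 1 \<le> len \<Omega> leq v \<longrightarrow> leq u v)"

definition down_closure :: "'i set \<Rightarrow> ('i \<Rightarrow> 'i \<Rightarrow> bool) \<Rightarrow> 'i set \<Rightarrow> 'i set" where
  "down_closure \<Omega> leq B = {x\<in>\<Omega>. \<exists>b\<in>B. leq x b}"

definition poset_wt :: "'i set \<Rightarrow> ('i \<Rightarrow> 'i \<Rightarrow> bool) \<Rightarrow> 'i set \<Rightarrow> nat" where
  "poset_wt \<Omega> leq S = card (down_closure \<Omega> leq S)"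

definition prod_carrier :: "'i set \<Rightarrow> ('i \<Rightarrow> ('a, 'b) monoid_scheme) \<Rightarrow> ('i \<Rightarrow> 'a) set" where
  "prod_carrier \<Omega> G = (\<Pi>\<^sub>E i\<in>\<Omega>. carrier (G i))"

definition characters :: "('a, 'b) monoid_scheme \<Rightarrow> ('a \<Rightarrow> complex) set" where
  "characters G = {\<chi>. \<chi> \<in> extensional (carrier G) \<and>
      (\<forall>x\<in>carrier G. norm (\<chi> x) = 1) \<and>
      (\<forall>x\<in>carrier G. \<forall>y\<in>carrier G. \<chi> (x \<otimes>\<^bsub>G\<^esub> y) = \<chi> x * \<chi> y)}"

definition trivial_char :: "('a, 'b) monoid_scheme \<Rightarrow> 'a \<Rightarrow> complex" where
  "trivial_char G = (\<lambda>x\<in>carrier G. 1)"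

text \<open>The character group of H, identified with the product of the character groups.\<close>
definition dual_carrier :: "'i set \<Rightarrow> ('i \<Rightarrow> ('a, 'b) monoid_scheme) \<Rightarrow> ('i \<Rightarrow> 'a \<Rightarrow> complex) set" where
  "dual_carrier \<Omega> G = (\<Pi>\<^sub>E i\<in>\<Omega>. characters (G i))"

definition char_eval :: "'i set \<Rightarrow> ('i \<Rightarrow> 'a \<Rightarrow> complex) \<Rightarrow> ('i \<Rightarrow> 'a) \<Rightarrow> complex" where
  "char_eval \<Omega> \<alpha> \<beta> = (\<Prod>i\<in>\<Omega>. \<alpha> i (\<beta> i))"

definition supp_H :: "'i set \<Rightarrow> ('i \<Rightarrow> ('a, 'b) monoid_scheme) \<Rightarrow> ('i \<Rightarrow> 'a) \<Rightarrow> 'i set" where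
  "supp_H \<Omega> G \<beta> = {i\<in>\<Omega>. \<beta> i \<noteq> \<one>\<^bsub>G i\<^esub>}"

definition supp_dual :: "'i set \<Rightarrow> ('i \<Rightarrow> ('a, 'b) monoid_scheme) \<Rightarrow> ('i \<Rightarrow> 'a \<Rightarrow> complex) \<Rightarrow> 'i set" where
  "supp_dual \<Omega> G \<alpha> = {i\<in>\<Omega>. \<alpha> i \<noteq> trivial_char (G i)}"

definition level_partition :: "'x set \<Rightarrow> ('x \<Rightarrow> nat) \<Rightarrow> 'x set set" where
  "level_partition X w = (\<lambda>x. {y\<in>X. w y = w x}) ` X"

definition Q_H :: "'i set \<Rightarrow> ('i \<Rightarrow> ('a, 'b) monoid_scheme) \<Rightarrow> ('i \<Rightarrow> 'i \<Rightarrow> bool) \<Rightarrow> ('i \<Rightarrow> 'a) set set" where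
  "Q_H \<Omega> G leq = level_partition (prod_carrier \<Omega> G) (\<lambda>\<beta>. poset_wt \<Omega> leq (supp_H \<Omega> G \<beta>))"

definition Q_dual :: "'i set \<Rightarrow> ('i \<Rightarrow> ('a, 'b) monoid_scheme) \<Rightarrow> ('i \<Rightarrow> 'i \<Rightarrow> bool) \<Rightarrow> ('i \<Rightarrow> 'a \<Rightarrow> complex) set set" where
  "Q_dual \<Omega> G leq = level_partition (dual_carrier \<Omega> G)
     (\<lambda>\<alpha>. poset_wt \<Omega> (dual_order leq) (supp_dual \<Omega> G \<alpha>))"

definition Lambda_rel :: "'i set \<Rightarrow> ('i \<Rightarrow> ('a, 'b) monoid_scheme) \<Rightarrow> ('i \<Rightarrow> 'i \<Rightarrow> bool)
    \<Rightarrow> ('i \<Rightarrow> 'a \<Rightarrow> complex) \<Rightarrow> ('i \<Rightarrow> 'a \<Rightarrow> complex) \<Rightarrow> bool" where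
  "Lambda_rel \<Omega> G leq \<chi> \<psi> \<longleftrightarrow>
     (\<forall>B\<in>Q_H \<Omega> G leq. (\<Sum>b\<in>B. char_eval \<Omega> \<chi> b) = (\<Sum>b\<in>B. char_eval \<Omega> \<psi> b))"

definition Lambda :: "'i set \<Rightarrow> ('i \<Rightarrow> ('a, 'b) monoid_scheme) \<Rightarrow> ('i \<Rightarrow> 'i \<Rightarrow> bool) \<Rightarrow> ('i \<Rightarrow> 'a \<Rightarrow> complex) set set" where
  "Lambda \<Omega> G leq = (\<lambda>\<chi>. {\<psi>\<in>dual_carrier \<Omega> G. Lambda_rel \<Omega> G leq \<chi> \<psi>}) ` dual_carrier \<Omega> G"

definition finer :: "'x set set \<Rightarrow> 'x set set \<Rightarrow> bool" where
  "finer P Q \<longleftrightarrow> (\<forall>A\<in>P. \<exists>B\<in>Q. A \<subseteq> B)"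

end

theory Submission
  imports Defs
begin

text \<open>
  In a hierarchical poset \<open>u \<preccurlyeq> v\<close> holds iff \<open>u = v\<close> or \<open>len u < len v\<close>, so
  weights only see levels: a support \<open>S\<close> whose highest level is \<open>m\<close> has \<open>\<P>\<close>-weight
  \<open>|below m| + |S \<inter> level m|\<close>, and a support \<open>T\<close> whose lowest level is \<open>m\<close> has dual weight
  \<open>|T \<inter> level m| + |above m|\<close>. For every level \<open>m\<close> and \<open>t \<in> \<complex>\<close> the function of the
  \<open>\<P>\<close>-weight that is \<open>1\<close> up to \<open>|below m|\<close>, \<open>t\<^sup>k\<close> at \<open>|below m| + k\<close> and \<open>0\<close> beyond
  \<open>|below (m+1)|\<close> is a product of functions of the coordinates, so its character sum against
  \<open>\<chi>\<close> is a product of character sums over the single groups \<open>H\<^sub>i\<close>, which depends only on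
  \<open>supp \<chi>\<close>; and \<open>\<Lambda>\<close>-equivalent characters give equal sums. At \<open>t = 0\<close> the product
  vanishes iff \<open>supp \<chi>\<close> meets \<open>below m\<close>, which recovers the lowest level of \<open>supp \<chi>\<close>; at
  that level it is a nonzero constant times \<open>(1 - t)\<^bsup>|supp \<chi> \<inter> level m|\<^esup>\<close> times a factor
  not vanishing at \<open>t = 1\<close>, so the order of the zero at \<open>1\<close> recovers
  \<open>|supp \<chi> \<inter> level m|\<close>, and with it the dual weight.
\<close>

section \<open>Order of a zero at 1\<close>

lemma power_mult_eq_imp_exponent_eq:
  fixes f g :: "'a::real_normed_field \<Rightarrow> 'a"
  assumes "\<And>t. (1 - t) ^ a * f t = (1 - t) ^ b * g t"
    and "isCont f 1" "isCont g 1" "f 1 \<noteq> 0" "g 1 \<noteq> 0"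
  shows "a = b"
proof -
  have "\<not> a < b"
    if eq: "\<And>t. (1 - t) ^ a * f t = (1 - t) ^ b * g t"
      and "isCont f 1" "isCont g 1" "f 1 \<noteq> 0"
    for a b and f g :: "'a \<Rightarrow> 'a"
  proof
    assume "a < b"
    have "f t = (1 - t) ^ (b - a) * g t" if "t \<noteq> 1" for t
    proof -
      have "(1 - t) ^ a * f t = (1 - t) ^ a * ((1 - t) ^ (b - a) * g t)"
        using eq[of t] \<open>a < b\<close> by (simp add: power_add[symmetric])
      with that show ?thesis by simp
    qed
    then have "\<forall>\<^sub>F t in at 1. (1 - t) ^ (b - a) * g t = f t"
      by (auto simp: eventually_at_filter)
    moreover have "((\<lambda>t. (1 - t) ^ (b - a) * g t) \<longlongrightarrow> 0) (at 1)"
      using \<open>isCont g 1\<close> \<open>a < b\<close> unfolding isCont_def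
      by (auto intro!: tendsto_eq_intros)
    ultimately have "(f \<longlongrightarrow> 0) (at 1)"
      using Lim_transform_eventually by blast
    moreover have "(f \<longlongrightarrow> f 1) (at 1)" using \<open>isCont f 1\<close> by (simp add: isCont_def)
    ultimately show False
      using \<open>f 1 \<noteq> 0\<close> tendsto_unique[OF at_neq_bot] by metis
  qed
  from this[of a f b g] this[of b g a f] show ?thesis
    using assms by (metis linorder_neqE_nat)
qed

section \<open>Characters of a finite group\<close>

lemma character_one:
  assumes "group H" "\<chi> \<in> characters H"
  shows "\<chi> \<one>\<^bsub>H\<^esub> = 1"
proof -
  have one: "\<one>\<^bsub>H\<^esub> \<in> carrier H" "\<one>\<^bsub>H\<^esub> \<otimes>\<^bsub>H\<^esub> \<one>\<^bsub>H\<^esub> = \<one>\<^bsub>H\<^esub>"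
    using assms(1) by (auto simp: group.is_monoid)
  have "norm (\<chi> \<one>\<^bsub>H\<^esub>) = 1" "\<chi> (\<one>\<^bsub>H\<^esub> \<otimes>\<^bsub>H\<^esub> \<one>\<^bsub>H\<^esub>) = \<chi> \<one>\<^bsub>H\<^esub> * \<chi> \<one>\<^bsub>H\<^esub>"
    using assms(2) one(1) unfolding characters_def by auto
  then have "\<chi> \<one>\<^bsub>H\<^esub> * \<chi> \<one>\<^bsub>H\<^esub> = \<chi> \<one>\<^bsub>H\<^esub>" "\<chi> \<one>\<^bsub>H\<^esub> \<noteq> 0"
    using one(2) by auto
  then show ?thesis
    by (metis mult_cancel_left2 mult.commute)
qed

lemma sum_character:
  assumes "group H" "finite (carrier H)" "\<chi> \<in> characters H"
  shows "(\<Sum>h\<in>carrier H. \<chi> h) = (if \<chi> = trivial_char H then of_nat (card (carrier H)) else 0)"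
proof (cases "\<chi> = trivial_char H")
  case True
  then show ?thesis by (simp add: trivial_char_def)
next
  case False
  interpret group H by fact
  have "\<chi> \<in> extensional (carrier H)" using assms(3) unfolding characters_def by auto
  with False obtain g where g: "g \<in> carrier H" "\<chi> g \<noteq> 1"
    unfolding trivial_char_def by (metis restrict_ext extensional_restrict)
  have bij: "bij_betw (\<lambda>x. g \<otimes>\<^bsub>H\<^esub> x) (carrier H) (carrier H)"
    using inj_on_cmult[OF g(1)] surj_const_mult[OF g(1)] by (simp add: bij_betw_def)
  have "(\<Sum>h\<in>carrier H. \<chi> h) = (\<Sum>h\<in>carrier H. \<chi> (g \<otimes>\<^bsub>H\<^esub> h))"
    using sum.reindex_bij_betw[OF bij, of \<chi>] by simp
  also have "\<dots> = \<chi> g * (\<Sum>h\<in>carrier H. \<chi> h)"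
    using assms(3) g(1) unfolding characters_def by (auto simp: sum_distrib_left intro: sum.cong)
  finally have "(1 - \<chi> g) * (\<Sum>h\<in>carrier H. \<chi> h) = 0" by (simp add: algebra_simps)
  with g False show ?thesis by simp
qed

lemma sum_character_weighted_one:
  assumes "group H" "finite (carrier H)" "\<chi> \<in> characters H"
  shows "(\<Sum>h\<in>carrier H. (if h = \<one>\<^bsub>H\<^esub> then 1 else c) * \<chi> h) =
    (if \<chi> = trivial_char H then 1 + c * (of_nat (card (carrier H)) - 1) else 1 - c)"
proof -
  have one: "\<one>\<^bsub>H\<^esub> \<in> carrier H" using assms(1) by (simp add: group.is_monoid)
  have "(\<Sum>h\<in>carrier H. (if h = \<one>\<^bsub>H\<^esub> then 1 else c) * \<chi> h)
      = (\<Sum>h\<in>carrier H. c * \<chi> h + (if h = \<one>\<^bsub>H\<^esub> then (1 - c) * \<chi> h else 0))"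
    by (intro sum.cong) (auto simp: algebra_simps)
  also have "\<dots> = c * (\<Sum>h\<in>carrier H. \<chi> h) + (1 - c)"
    using assms(2) one character_one[OF assms(1,3)] by (simp add: sum.distrib sum_distrib_left)
  also have "\<dots> = (if \<chi> = trivial_char H then 1 + c * (of_nat (card (carrier H)) - 1) else 1 - c)"
    using sum_character[OF assms] by (auto simp: algebra_simps)
  finally show ?thesis .
qed

section \<open>Hierarchical posets\<close>

lemma poset_on_refl: "poset_on \<Omega> leq \<Longrightarrow> x \<in> \<Omega> \<Longrightarrow> leq x x"
  unfolding poset_on_def by blast

lemma poset_on_antisym:
  "poset_on \<Omega> leq \<Longrightarrow> x \<in> \<Omega> \<Longrightarrow> y \<in> \<Omega> \<Longrightarrow> leq x y \<Longrightarrow> leq y x \<Longrightarrow> x = y"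
  unfolding poset_on_def by blast

lemma poset_on_trans:
  "poset_on \<Omega> leq \<Longrightarrow> x \<in> \<Omega> \<Longrightarrow> y \<in> \<Omega> \<Longrightarrow> z \<in> \<Omega> \<Longrightarrow> leq x y \<Longrightarrow> leq y z \<Longrightarrow> leq x z"
  unfolding poset_on_def by blast

lemma finite_chain_top: "finite \<Omega> \<Longrightarrow> finite {C. chain_top \<Omega> leq y C}"
  by (rule finite_subset[of _ "Pow \<Omega>"]) (auto simp: chain_top_def)

lemma card_le_len:
  assumes "finite \<Omega>" "chain_top \<Omega> leq y C"
  shows "card C \<le> len \<Omega> leq y"
  unfolding len_def using assms finite_chain_top[OF assms(1)] by simp

lemma len_attained:
  assumes "finite \<Omega>" "chain_top \<Omega> leq y C0"
  obtains C where "chain_top \<Omega> leq y C" "card C = len \<Omega> leq y"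
proof -
  have "card ` {C. chain_top \<Omega> leq y C} \<noteq> {}"
    using assms(2) by blast
  then have "len \<Omega> leq y \<in> card ` {C. chain_top \<Omega> leq y C}"
    unfolding len_def using finite_chain_top[OF assms(1)] by (simp add: Max_in)
  then show ?thesis using that by auto
qed

lemma chain_top_insert:
  assumes "poset_on \<Omega> leq" "chain_top \<Omega> leq u C" "v \<in> \<Omega>" "leq u v"
  shows "chain_top \<Omega> leq v (insert v C)"
proof -
  have C: "C \<subseteq> \<Omega>" "u \<in> C" "\<And>x. x \<in> C \<Longrightarrow> leq x u"
    "\<And>x z. x \<in> C \<Longrightarrow> z \<in> C \<Longrightarrow> leq x z \<or> leq z x"
    using assms(2) unfolding chain_top_def by auto
  have below_v: "leq x v" if "x \<in> C" for x
    using poset_on_trans[OF assms(1) _ _ assms(3) C(3)[OF that] assms(4)] that C(1,2) by blast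
  show ?thesis
    unfolding chain_top_def
    using C(1,4) below_v poset_on_refl[OF assms(1,3)] assms(3) by auto
qed

lemma len_strict_mono:
  assumes "finite \<Omega>" "poset_on \<Omega> leq" "u \<in> \<Omega>" "v \<in> \<Omega>" "leq u v" "u \<noteq> v"
  shows "len \<Omega> leq u < len \<Omega> leq v"
proof -
  have "chain_top \<Omega> leq u {u}"
    using poset_on_refl[OF assms(2,3)] assms(3) by (simp add: chain_top_def)
  with assms(1) obtain C where C: "chain_top \<Omega> leq u C" "card C = len \<Omega> leq u"
    by (rule len_attained)
  have "v \<notin> C"
  proof
    assume "v \<in> C"
    then have "leq v u" using C(1) by (simp add: chain_top_def)
    then show False
      using poset_on_antisym[OF assms(2,3,4,5)] assms(6) by simp
  qed
  moreover have "finite C"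
    using C(1) assms(1) rev_finite_subset unfolding chain_top_def by auto
  ultimately have "card (insert v C) = len \<Omega> leq u + 1"
    using C(2) by simp
  moreover have "card (insert v C) \<le> len \<Omega> leq v"
    using card_le_len[OF assms(1) chain_top_insert[OF assms(2) C(1) assms(4,5)]] .
  ultimately show ?thesis by simp
qed

lemma hierarchical_leq_iff:
  assumes "finite \<Omega>" "poset_on \<Omega> leq" "hierarchical \<Omega> leq" "u \<in> \<Omega>" "v \<in> \<Omega>"
  shows "leq u v \<longleftrightarrow> u = v \<or> len \<Omega> leq u < len \<Omega> leq v"
proof
  assume "leq u v"
  then show "u = v \<or> len \<Omega> leq u < len \<Omega> leq v"
    using len_strict_mono[OF assms(1,2,4,5)] by blast
next
  assume "u = v \<or> len \<Omega> leq u < len \<Omega> leq v"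
  moreover have "len \<Omega> leq u + 1 \<le> len \<Omega> leq v \<Longrightarrow> leq u v"
    using assms(3-5) unfolding hierarchical_def by blast
  ultimately show "leq u v"
    using poset_on_refl[OF assms(2,4)] by auto
qed

section \<open>Weights in a poset ordered by levels\<close>

locale level_order =
  fixes \<Omega> :: "'i set" and leq :: "'i \<Rightarrow> 'i \<Rightarrow> bool" and lvl :: "'i \<Rightarrow> nat"
  assumes finite_domain: "finite \<Omega>"
    and leq_iff_lvl: "u \<in> \<Omega> \<Longrightarrow> v \<in> \<Omega> \<Longrightarrow> leq u v \<longleftrightarrow> u = v \<or> lvl u < lvl v"
begin

definition below :: "nat \<Rightarrow> 'i set" where
  "below m = {x \<in> \<Omega>. lvl x < m}"

definition level :: "nat \<Rightarrow> 'i set" where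
  "level m = {x \<in> \<Omega>. lvl x = m}"

definition above :: "nat \<Rightarrow> 'i set" where
  "above m = {x \<in> \<Omega>. m < lvl x}"

lemma finite_below [simp]: "finite (below m)"
  using finite_domain by (simp add: below_def)

lemma finite_level [simp]: "finite (level m)"
  using finite_domain by (simp add: level_def)

lemma finite_above [simp]: "finite (above m)"
  using finite_domain by (simp add: above_def)

lemma finite_subset_domain: "S \<subseteq> \<Omega> \<Longrightarrow> finite S"
  by (rule finite_subset[OF _ finite_domain])

lemma below_Suc: "below (Suc m) = below m \<union> level m"
  by (auto simp: below_def level_def)

lemma card_below_Suc: "card (below (Suc m)) = card (below m) + card (level m)"
  unfolding below_Suc
  by (intro card_Un_disjoint finite_below finite_level) (auto simp: below_def level_def)

lemma down_closure_lvl: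
  assumes "S \<subseteq> \<Omega>"
  shows "down_closure \<Omega> leq S = S \<union> {x \<in> \<Omega>. \<exists>b\<in>S. lvl x < lvl b}"
proof -
  have "leq x b \<longleftrightarrow> x = b \<or> lvl x < lvl b" if "x \<in> \<Omega>" "b \<in> S" for x b
    using leq_iff_lvl that assms by blast
  then show ?thesis
    using assms unfolding down_closure_def by blast
qed

lemma dual_down_closure_lvl:
  assumes "S \<subseteq> \<Omega>"
  shows "down_closure \<Omega> (dual_order leq) S = S \<union> {x \<in> \<Omega>. \<exists>b\<in>S. lvl b < lvl x}"
proof -
  have "leq b x \<longleftrightarrow> b = x \<or> lvl b < lvl x" if "x \<in> \<Omega>" "b \<in> S" for x b
    using leq_iff_lvl that assms by blast
  then show ?thesis
    using assms unfolding down_closure_def dual_order_def by blast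
qed

lemma poset_wt_le_below:
  assumes "S \<subseteq> below m"
  shows "poset_wt \<Omega> leq S \<le> card (below m)"
proof -
  have "S \<subseteq> \<Omega>" using assms by (auto simp: below_def)
  then have "down_closure \<Omega> leq S \<subseteq> below m"
    using assms by (auto simp: down_closure_lvl below_def)
  then show ?thesis
    unfolding poset_wt_def by (simp add: card_mono)
qed

lemma poset_wt_top_level:
  assumes "S \<subseteq> below (Suc m)" "S \<inter> level m \<noteq> {}"
  shows "poset_wt \<Omega> leq S = card (below m) + card (S \<inter> level m)"
proof -
  have "S \<subseteq> \<Omega>" using assms(1) by (auto simp: below_def)
  then have "down_closure \<Omega> leq S = below m \<union> (S \<inter> level m)"
    using assms by (auto simp: down_closure_lvl below_def level_def)
  moreover have "below m \<inter> (S \<inter> level m) = {}"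
    by (auto simp: below_def level_def)
  ultimately show ?thesis
    unfolding poset_wt_def by (simp add: card_Un_disjoint)
qed

lemma poset_wt_gt_below:
  assumes "S \<subseteq> \<Omega>" "b \<in> S" "m < lvl b"
  shows "card (below (Suc m)) < poset_wt \<Omega> leq S"
proof -
  have "insert b (below (Suc m)) \<subseteq> down_closure \<Omega> leq S"
    using assms by (auto simp: down_closure_lvl below_def intro!: bexI[of _ b])
  moreover have "b \<notin> below (Suc m)"
    using assms(3) by (simp add: below_def)
  moreover have "finite (down_closure \<Omega> leq S)"
    using finite_domain by (simp add: down_closure_def)
  ultimately show ?thesis
    unfolding poset_wt_def by (metis card_insert_disjoint card_mono finite_below less_eq_Suc_le)
qed

lemma dual_poset_wt_bottom_level:
  assumes "S \<subseteq> \<Omega>" "S \<inter> below m = {}" "S \<inter> level m \<noteq> {}"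
  shows "poset_wt \<Omega> (dual_order leq) S = card (S \<inter> level m) + card (above m)"
proof -
  have "down_closure \<Omega> (dual_order leq) S = (S \<inter> level m) \<union> above m"
    using assms by (auto simp: dual_down_closure_lvl below_def level_def above_def)
  moreover have "(S \<inter> level m) \<inter> above m = {}"
    by (auto simp: level_def above_def)
  ultimately show ?thesis
    unfolding poset_wt_def by (simp add: card_Un_disjoint)
qed

definition level_factor :: "nat \<Rightarrow> complex \<Rightarrow> 'i \<Rightarrow> complex" where
  "level_factor m t i = (if lvl i < m then 1 else if lvl i = m then t else 0)"

definition weight_test :: "nat \<Rightarrow> complex \<Rightarrow> nat \<Rightarrow> complex" where
  "weight_test m t w =
    (if w \<le> card (below m) then 1
     else if w \<le> card (below (Suc m)) then t ^ (w - card (below m)) else 0)"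

lemma prod_level_factor:
  assumes "S \<subseteq> below (Suc m)"
  shows "(\<Prod>i\<in>S. level_factor m t i) = t ^ card (S \<inter> level m)"
proof -
  have "finite S"
    using assms by (rule finite_subset) simp
  have "(\<Prod>i\<in>S. level_factor m t i) = (\<Prod>i\<in>S. if i \<in> level m then t else 1)"
    using assms by (intro prod.cong) (auto simp: level_factor_def below_def level_def)
  also have "\<dots> = t ^ card (S \<inter> level m)"
    using \<open>finite S\<close> by (simp add: prod.If_cases Int_def)
  finally show ?thesis .
qed

lemma weight_test_poset_wt:
  assumes "S \<subseteq> \<Omega>"
  shows "weight_test m t (poset_wt \<Omega> leq S) = (\<Prod>i\<in>S. level_factor m t i)"
proof (cases "\<exists>b\<in>S. m < lvl b")
  case True
  then obtain b where b: "b \<in> S" "m < lvl b" by blast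
  with finite_subset_domain[OF assms] have "(\<Prod>i\<in>S. level_factor m t i) = 0"
    by (intro prod_zero) (auto simp: level_factor_def intro!: bexI[of _ b])
  moreover have "card (below (Suc m)) < poset_wt \<Omega> leq S"
    using assms b by (rule poset_wt_gt_below)
  ultimately show ?thesis
    by (simp add: weight_test_def card_below_Suc)
next
  case False
  then have S_below: "S \<subseteq> below (Suc m)"
    using assms by (auto simp: below_def not_less)
  show ?thesis
  proof (cases "S \<inter> level m = {}")
    case True
    then have "poset_wt \<Omega> leq S \<le> card (below m)"
      using S_below below_Suc by (intro poset_wt_le_below) blast
    with True show ?thesis
      by (simp add: weight_test_def prod_level_factor[OF S_below])
  next
    case False
    have "0 < card (S \<inter> level m)" "card (S \<inter> level m) \<le> card (level m)"
      using False by (auto simp: card_gt_0_iff intro: card_mono)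
    then show ?thesis
      using poset_wt_top_level[OF S_below False]
      by (simp add: weight_test_def card_below_Suc prod_level_factor[OF S_below])
  qed
qed

text \<open>With \<open>n i = |H\<^sub>i|\<close>, this is the character sum of \<open>weight_test m t\<close> against a character
  with support \<open>T\<close> (lemma \<open>sum_weight_test_character\<close>).\<close>

definition level_poly :: "('i \<Rightarrow> nat) \<Rightarrow> nat \<Rightarrow> 'i set \<Rightarrow> complex \<Rightarrow> complex" where
  "level_poly n m T t = (\<Prod>i\<in>\<Omega>. if i \<in> T then 1 - level_factor m t i
                                  else 1 + level_factor m t i * (of_nat (n i) - 1))"

lemma level_poly_zero_iff:
  assumes "\<And>i. i \<in> \<Omega> \<Longrightarrow> 0 < n i"
  shows "level_poly n m T 0 = 0 \<longleftrightarrow> T \<inter> below m \<noteq> {}"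
proof -
  have n_nz: "n i \<noteq> 0" if "i \<in> \<Omega>" for i
    using assms that by blast
  have "level_poly n m T 0 = 0 \<longleftrightarrow> (\<exists>i\<in>\<Omega>. i \<in> T \<and> lvl i < m)"
    using finite_domain by (auto simp: level_poly_def level_factor_def n_nz split: if_splits)
  then show ?thesis
    by (auto simp: below_def)
qed

lemma level_poly_factorization:
  assumes "T \<inter> below m = {}"
  shows "level_poly n m T t = (\<Prod>i\<in>below m. of_nat (n i)) *
    ((1 - t) ^ card (T \<inter> level m) * (\<Prod>i\<in>level m - T. 1 + t * (of_nat (n i) - 1)))"
proof -
  define f where "f i = (if i \<in> T then 1 - level_factor m t i
                         else 1 + level_factor m t i * (of_nat (n i) - 1))" for i
  have "level_poly n m T t = prod f (below (Suc m))"
    unfolding level_poly_def f_def using finite_domain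
    by (intro prod.mono_neutral_right) (auto simp: below_def level_factor_def)
  also have "\<dots> = prod f (below m) * prod f (level m)"
    unfolding below_Suc
    by (intro prod.union_disjoint finite_below finite_level) (auto simp: below_def level_def)
  also have "prod f (below m) = (\<Prod>i\<in>below m. of_nat (n i))"
    using assms by (intro prod.cong) (auto simp: f_def level_factor_def below_def)
  also have "prod f (level m) = (\<Prod>i\<in>level m. if i \<in> T then 1 - t else 1 + t * (of_nat (n i) - 1))"
    by (intro prod.cong) (auto simp: f_def level_factor_def level_def)
  also have "\<dots> = (1 - t) ^ card (T \<inter> level m) * (\<Prod>i\<in>level m - T. 1 + t * (of_nat (n i) - 1))"
    by (simp add: prod.If_cases Int_def Diff_eq conj_commute)
  finally show ?thesis .
qed

lemma level_poly_level_card_eq: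
  assumes n_pos: "\<And>i. i \<in> \<Omega> \<Longrightarrow> 0 < n i"
    and "T \<inter> below m = {}" "U \<inter> below m = {}"
    and "\<And>t. level_poly n m T t = level_poly n m U t"
  shows "card (T \<inter> level m) = card (U \<inter> level m)"
proof -
  define F where "F X t = (\<Prod>i\<in>level m - X. 1 + t * (of_nat (n i) - 1))" for X and t :: complex
  have n_pos': "\<forall>i\<in>below m. 0 < n i" "\<forall>i\<in>level m. 0 < n i"
    using n_pos by (simp_all add: below_def level_def)
  then have "(\<Prod>i\<in>below m. of_nat (n i)) \<noteq> (0::complex)"
    by simp
  then have factored:
    "(1 - t) ^ card (T \<inter> level m) * F T t = (1 - t) ^ card (U \<inter> level m) * F U t" for t
    using assms(4)[of t]
    unfolding level_poly_factorization[OF assms(2)] level_poly_factorization[OF assms(3)]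
    by (auto simp: F_def)
  have continuous: "isCont (F X) 1" for X
    unfolding F_def by (intro continuous_intros)
  have nonzero: "F X 1 \<noteq> 0" for X
    using n_pos'(2) by (simp add: F_def)
  show ?thesis
    using power_mult_eq_imp_exponent_eq[OF factored continuous continuous nonzero nonzero] .
qed

lemma below_disjoint_iff_le_Min:
  assumes "T \<subseteq> \<Omega>" "T \<noteq> {}"
  shows "T \<inter> below m = {} \<longleftrightarrow> m \<le> Min (lvl ` T)"
  using assms finite_subset_domain[OF assms(1)] by (auto simp: below_def not_less)

lemma level_Min_nonempty:
  assumes "T \<subseteq> \<Omega>" "T \<noteq> {}"
  shows "T \<inter> level (Min (lvl ` T)) \<noteq> {}"
proof -
  have "Min (lvl ` T) \<in> lvl ` T"
    using finite_subset_domain[OF assms(1)] assms(2) by simp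
  with assms(1) show ?thesis
    by (auto simp: level_def)
qed

lemma empty_iff_below_disjoint: "T \<subseteq> \<Omega> \<Longrightarrow> T = {} \<longleftrightarrow> (\<forall>m. T \<inter> below m = {})"
  by (auto simp: below_def)

lemma Min_lvl_eq_if_below_disjoint_iff:
  assumes "T \<subseteq> \<Omega>" "T \<noteq> {}" "U \<subseteq> \<Omega>" "U \<noteq> {}"
    and "\<And>m. T \<inter> below m = {} \<longleftrightarrow> U \<inter> below m = {}"
  shows "Min (lvl ` T) = Min (lvl ` U)"
proof -
  have "k \<le> Min (lvl ` T) \<longleftrightarrow> k \<le> Min (lvl ` U)" for k
    using assms(5)[of k] below_disjoint_iff_le_Min[OF assms(1,2), of k]
      below_disjoint_iff_le_Min[OF assms(3,4), of k] by argo
  from this[of "Min (lvl ` T)"] this[of "Min (lvl ` U)"] show ?thesis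
    by simp
qed

theorem dual_poset_wt_eq_if_level_poly_eq:
  assumes n_pos: "\<And>i. i \<in> \<Omega> \<Longrightarrow> 0 < n i"
    and T: "T \<subseteq> \<Omega>" and U: "U \<subseteq> \<Omega>"
    and eq: "\<And>m t. level_poly n m T t = level_poly n m U t"
  shows "poset_wt \<Omega> (dual_order leq) T = poset_wt \<Omega> (dual_order leq) U"
proof -
  have zero_iff: "level_poly n m X 0 = 0 \<longleftrightarrow> X \<inter> below m \<noteq> {}" for m X
    by (intro level_poly_zero_iff n_pos)
  have below_iff: "T \<inter> below m = {} \<longleftrightarrow> U \<inter> below m = {}" for m
    using zero_iff[of m T] zero_iff[of m U] eq[of m 0] by argo
  show ?thesis
  proof (cases "T = {}")
    case True
    then have "U = {}"
      using below_iff empty_iff_below_disjoint[OF T] empty_iff_below_disjoint[OF U] by blast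
    with True show ?thesis by simp
  next
    case False
    then have "U \<noteq> {}"
      using below_iff empty_iff_below_disjoint[OF T] empty_iff_below_disjoint[OF U] by blast
    define m where "m = Min (lvl ` T)"
    have m_U: "Min (lvl ` U) = m"
      unfolding m_def using below_iff[symmetric]
      by (rule Min_lvl_eq_if_below_disjoint_iff[OF U \<open>U \<noteq> {}\<close> T False])
    have T_below: "T \<inter> below m = {}" and U_below: "U \<inter> below m = {}"
      using below_disjoint_iff_le_Min[OF T False, of m] below_iff[of m] m_def by simp_all
    moreover have "T \<inter> level m \<noteq> {}" "U \<inter> level m \<noteq> {}"
      using level_Min_nonempty[OF T False] level_Min_nonempty[OF U \<open>U \<noteq> {}\<close>] m_U m_def
      by simp_all
    moreover have "card (T \<inter> level m) = card (U \<inter> level m)"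
      by (intro level_poly_level_card_eq[where n = n] n_pos T_below U_below eq)
    ultimately show ?thesis
      using T U by (simp add: dual_poset_wt_bottom_level)
  qed
qed

end

section \<open>Character sums over the product group\<close>

lemma sum_poset_wt_eq_if_Lambda_rel:
  assumes "finite (prod_carrier \<Omega> G)" "Lambda_rel \<Omega> G leq \<chi> \<psi>"
  shows "(\<Sum>\<beta>\<in>prod_carrier \<Omega> G. f (poset_wt \<Omega> leq (supp_H \<Omega> G \<beta>)) * char_eval \<Omega> \<chi> \<beta>) =
    (\<Sum>\<beta>\<in>prod_carrier \<Omega> G. f (poset_wt \<Omega> leq (supp_H \<Omega> G \<beta>)) * char_eval \<Omega> \<psi> \<beta>)"
proof -
  define wt where "wt \<beta> = poset_wt \<Omega> leq (supp_H \<Omega> G \<beta>)" for \<beta>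
  define block where "block w = {\<beta> \<in> prod_carrier \<Omega> G. wt \<beta> = w}" for w
  have grouped: "(\<Sum>\<beta>\<in>prod_carrier \<Omega> G. f (wt \<beta>) * char_eval \<Omega> \<phi> \<beta>) =
      (\<Sum>w\<in>wt ` prod_carrier \<Omega> G. f w * (\<Sum>\<beta>\<in>block w. char_eval \<Omega> \<phi> \<beta>))" for \<phi>
  proof -
    have "(\<Sum>\<beta>\<in>prod_carrier \<Omega> G. f (wt \<beta>) * char_eval \<Omega> \<phi> \<beta>) =
        (\<Sum>w\<in>wt ` prod_carrier \<Omega> G. \<Sum>\<beta>\<in>block w. f (wt \<beta>) * char_eval \<Omega> \<phi> \<beta>)"
      unfolding block_def using assms(1) by (intro sum.group[symmetric]) auto
    also have "\<dots> = (\<Sum>w\<in>wt ` prod_carrier \<Omega> G. f w * (\<Sum>\<beta>\<in>block w. char_eval \<Omega> \<phi> \<beta>))"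
      by (intro sum.cong refl) (simp add: block_def sum_distrib_left)
    finally show ?thesis .
  qed
  have "block w \<in> Q_H \<Omega> G leq" if "w \<in> wt ` prod_carrier \<Omega> G" for w
    using that unfolding Q_H_def level_partition_def block_def wt_def by auto
  then show ?thesis
    using assms(2) unfolding wt_def[symmetric] grouped Lambda_rel_def by (intro sum.cong) auto
qed

lemma (in level_order) sum_weight_test_character:
  assumes "\<And>i. i \<in> \<Omega> \<Longrightarrow> group (G i)" "\<And>i. i \<in> \<Omega> \<Longrightarrow> finite (carrier (G i))"
    and "\<chi> \<in> dual_carrier \<Omega> G"
  shows "(\<Sum>\<beta>\<in>prod_carrier \<Omega> G. weight_test m t (poset_wt \<Omega> leq (supp_H \<Omega> G \<beta>)) * char_eval \<Omega> \<chi> \<beta>)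
    = level_poly (\<lambda>i. card (carrier (G i))) m (supp_dual \<Omega> G \<chi>) t"
proof -
  define c where "c i h = (if h = \<one>\<^bsub>G i\<^esub> then 1 else level_factor m t i)" for i h
  have "weight_test m t (poset_wt \<Omega> leq (supp_H \<Omega> G \<beta>)) = (\<Prod>i\<in>\<Omega>. c i (\<beta> i))" for \<beta>
  proof -
    have "weight_test m t (poset_wt \<Omega> leq (supp_H \<Omega> G \<beta>)) = (\<Prod>i\<in>supp_H \<Omega> G \<beta>. level_factor m t i)"
      by (rule weight_test_poset_wt) (auto simp: supp_H_def)
    also have "\<dots> = (\<Prod>i\<in>\<Omega>. c i (\<beta> i))"
      unfolding supp_H_def c_def using finite_domain
      by (subst prod.inter_filter) (auto intro!: prod.cong)
    finally show ?thesis .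
  qed
  then have "(\<Sum>\<beta>\<in>prod_carrier \<Omega> G. weight_test m t (poset_wt \<Omega> leq (supp_H \<Omega> G \<beta>)) * char_eval \<Omega> \<chi> \<beta>)
      = (\<Sum>\<beta>\<in>PiE \<Omega> (\<lambda>i. carrier (G i)). \<Prod>i\<in>\<Omega>. c i (\<beta> i) * \<chi> i (\<beta> i))"
    by (simp add: prod_carrier_def char_eval_def prod.distrib)
  also have "\<dots> = (\<Prod>i\<in>\<Omega>. \<Sum>h\<in>carrier (G i). c i h * \<chi> i h)"
    using finite_domain assms(2) by (intro prod_sum_PiE[symmetric]) auto
  also have "\<dots> = level_poly (\<lambda>i. card (carrier (G i))) m (supp_dual \<Omega> G \<chi>) t"
    unfolding level_poly_def
  proof (intro prod.cong refl)
    fix i assume i: "i \<in> \<Omega>"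
    then have "\<chi> i \<in> characters (G i)"
      using assms(3) by (auto simp: dual_carrier_def)
    from sum_character_weighted_one[OF assms(1)[OF i] assms(2)[OF i] this]
    show "(\<Sum>h\<in>carrier (G i). c i h * \<chi> i h) =
      (if i \<in> supp_dual \<Omega> G \<chi> then 1 - level_factor m t i
       else 1 + level_factor m t i * (of_nat (card (carrier (G i))) - 1))"
      using i by (simp add: c_def supp_dual_def)
  qed
  finally show ?thesis .
qed

lemma (in level_order) dual_poset_wt_eq_if_Lambda_rel:
  assumes group: "\<And>i. i \<in> \<Omega> \<Longrightarrow> group (G i)"
    and finite_G: "\<And>i. i \<in> \<Omega> \<Longrightarrow> finite (carrier (G i))"
    and \<chi>: "\<chi> \<in> dual_carrier \<Omega> G" and \<psi>: "\<psi> \<in> dual_carrier \<Omega> G"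
    and rel: "Lambda_rel \<Omega> G leq \<chi> \<psi>"
  shows "poset_wt \<Omega> (dual_order leq) (supp_dual \<Omega> G \<chi>) =
    poset_wt \<Omega> (dual_order leq) (supp_dual \<Omega> G \<psi>)"
proof -
  let ?n = "\<lambda>i. card (carrier (G i))"
  have order_pos: "0 < ?n i" if "i \<in> \<Omega>" for i
    using finite_G[OF that] monoid.one_closed[OF group.is_monoid[OF group[OF that]]]
    by (auto simp: card_gt_0_iff)
  have finite_H: "finite (prod_carrier \<Omega> G)"
    using finite_domain finite_G by (simp add: prod_carrier_def finite_PiE)
  have transform:
    "(\<Sum>\<beta>\<in>prod_carrier \<Omega> G. weight_test m t (poset_wt \<Omega> leq (supp_H \<Omega> G \<beta>)) * char_eval \<Omega> \<phi> \<beta>)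
      = level_poly ?n m (supp_dual \<Omega> G \<phi>) t"
    if "\<phi> \<in> dual_carrier \<Omega> G" for \<phi> m t
    by (rule sum_weight_test_character) (use group finite_G that in auto)
  have "level_poly ?n m (supp_dual \<Omega> G \<chi>) t = level_poly ?n m (supp_dual \<Omega> G \<psi>) t" for m t
    using sum_poset_wt_eq_if_Lambda_rel[OF finite_H rel, of "weight_test m t"]
    unfolding transform[OF \<chi>] transform[OF \<psi>] .
  then show ?thesis
    by (intro dual_poset_wt_eq_if_level_poly_eq[where n = ?n] order_pos) (auto simp: supp_dual_def)
qed

lemma finer_Lambda_Q_dual:
  assumes "\<And>\<chi> \<psi>. \<chi> \<in> dual_carrier \<Omega> G \<Longrightarrow> \<psi> \<in> dual_carrier \<Omega> G \<Longrightarrow> Lambda_rel \<Omega> G leq \<chi> \<psi> \<Longrightarrow>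
      poset_wt \<Omega> (dual_order leq) (supp_dual \<Omega> G \<chi>) = poset_wt \<Omega> (dual_order leq) (supp_dual \<Omega> G \<psi>)"
  shows "finer (Lambda \<Omega> G leq) (Q_dual \<Omega> G leq)"
  unfolding finer_def
proof
  fix A assume "A \<in> Lambda \<Omega> G leq"
  then obtain \<chi> where \<chi>: "\<chi> \<in> dual_carrier \<Omega> G"
    and A: "A = {\<psi> \<in> dual_carrier \<Omega> G. Lambda_rel \<Omega> G leq \<chi> \<psi>}"
    unfolding Lambda_def by blast
  let ?B = "{\<psi> \<in> dual_carrier \<Omega> G. poset_wt \<Omega> (dual_order leq) (supp_dual \<Omega> G \<psi>)
              = poset_wt \<Omega> (dual_order leq) (supp_dual \<Omega> G \<chi>)}"
  have "?B \<in> Q_dual \<Omega> G leq"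
    unfolding Q_dual_def level_partition_def using \<chi> by blast
  moreover have "A \<subseteq> ?B"
    unfolding A using assms[OF \<chi>] by force
  ultimately show "\<exists>B\<in>Q_dual \<Omega> G leq. A \<subseteq> B" by blast
qed

theorem corollary2p2:
  fixes \<Omega> :: "'i set" and G :: "'i \<Rightarrow> ('a, 'b) monoid_scheme" and leq :: "'i \<Rightarrow> 'i \<Rightarrow> bool"
  assumes "finite \<Omega>"
    and "\<And>i. i \<in> \<Omega> \<Longrightarrow> comm_group (G i)"
    and "\<And>i. i \<in> \<Omega> \<Longrightarrow> finite (carrier (G i))"
    and "poset_on \<Omega> leq"
    and "hierarchical \<Omega> leq"
  shows "finer (Lambda \<Omega> G leq) (Q_dual \<Omega> G leq)"
proof -
  interpret level_order \<Omega> leq "len \<Omega> leq"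
    by unfold_locales (simp_all add: assms(1) hierarchical_leq_iff[OF assms(1,4,5)])
  have group: "group (G i)" if "i \<in> \<Omega>" for i
    using assms(2)[OF that] by (rule comm_group.axioms(2))
  show ?thesis
    by (rule finer_Lambda_Q_dual, rule dual_poset_wt_eq_if_Lambda_rel) (use group assms(3) in auto)
qed

end
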